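(* Let $\Gamma(X,Y,E')$ be a connected bipartite graph with $m=|X|$, $n=|Y|$, and let $W=R_1R_0$ be the (extended) Szegedy walk operator on $\mathcal{H}^{m}\otimes\mathcal{H}^{n}$ defined from right-stochastic matrices $P=(p_{xy})$, $Q=(q_{yx})$ and real phases $\theta_{xy},\theta'_{xy}$ as described in the context. Let $\mathcal{H}_E\subset \mathcal{H}^{m}\otimes\mathcal{H}^{n}$ be the subspace spanned by $\{\ket{x}\otimes\ket{y}: \{x,y\}\in E'\}$. Then $W(\mathcal{H}_E)=\mathcal{H}_E$ and $W$ acts as the identity on $\mathcal{H}_E^{\perp}$; i.e., in a basis adapted to $\mathcal{H}_E\oplus\mathcal{H}_E^\perp$, $W=W|_{\mathcal{H}_E}\oplus I$.
   Context: Szegedy's QW: Let $\Gamma(X,Y,E')$ be a connected bipartite graph with biadjacency matrix $M$ ($M_{x,y}=1$ if $\{x,y\}\in E'$, else $0$). Let $P$ be an $m\times n$ right-stochastic matrix with entries $p_{xy}\ge 0$ such that $M_{x,y}=0\Rightarrow p_{xy}=0$, and $Q$ an $n\times m$ right-stochastic matrix with entries $q_{yx}\ge0$ such that $M_{x,y}=0\Rightarrow q_{yx}=0$. On $\mathcal{H}^{m}\otimes\mathcal{H}^{n}$ with computational basis $\{\ket{x,y}=\ket{x}\otimes\ket{y}: x\in X,y\in Y\}$ define, for real $\theta_{xy},\theta'_{xy}$, $\ket{\phi_x}=\sum_{y\in Y}\sqrt{p_{xy}}e^{i\theta_{xy}}\ket{x,y}$ and $\ket{\psi_y}=\sum_{x\in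 X}\sqrt{q_{yx}}e^{i\theta'_{xy}}\ket{x,y}$, and $R_0=2\sum_{x\in X}\ket{\phi_x}\bra{\phi_x}-I$, $R_1=2\sum_{y\in Y}\ket{\psi_y}\bra{\psi_y}-I$, $W=R_1R_0$. (Szegedy's original model has all phases zero; allowing nonzero phases gives the extended Szegedy QW.) *)

theory Defs
  imports Complex_Main
begin

text \<open>Vectors of H^m (x) H^n are functions on X \<times> Y (coefficients in the
computational basis |x,y>).  X and Y are finite types; the bipartite graph is
given by its biadjacency relation M.\<close>

type_synonym ('x,'y) qvec = "'x \<times> 'y \<Rightarrow> complex"

definition cinner :: "('x::finite,'y::finite) qvec \<Rightarrow> ('x,'y) qvec \<Rightarrow> complex" where
  "cinner u v = (\<Sum>k\<in>UNIV. cnj (u k) * v k)"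

definition ket :: "'x \<Rightarrow> 'y \<Rightarrow> ('x,'y) qvec" where
  "ket x y = (\<lambda>k. if k = (x,y) then 1 else 0)"

definition phi :: "('x \<Rightarrow> 'y \<Rightarrow> real) \<Rightarrow> ('x \<Rightarrow> 'y \<Rightarrow> real) \<Rightarrow> 'x \<Rightarrow> ('x,'y) qvec" where
  "phi p \<theta> x = (\<lambda>(x',y). if x' = x then complex_of_real (sqrt (p x y)) * exp (\<i> * complex_of_real (\<theta> x y)) else 0)"

definition psi :: "('y \<Rightarrow> 'x \<Rightarrow> real) \<Rightarrow> ('x \<Rightarrow> 'y \<Rightarrow> real) \<Rightarrow> 'y \<Rightarrow> ('x,'y) qvec" where
  "psi q \<theta>' y = (\<lambda>(x,y'). if y' = y then complex_of_real (sqrt (q y x)) * exp (\<i> * complex_of_real (\<theta>' x y)) else 0)"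

definition R0 :: "('x::finite \<Rightarrow> 'y::finite \<Rightarrow> real) \<Rightarrow> ('x \<Rightarrow> 'y \<Rightarrow> real) \<Rightarrow> ('x,'y) qvec \<Rightarrow> ('x,'y) qvec" where
  "R0 p \<theta> v = (\<lambda>k. 2 * (\<Sum>x\<in>UNIV. cinner (phi p \<theta> x) v * phi p \<theta> x k) - v k)"

definition R1 :: "('y::finite \<Rightarrow> 'x::finite \<Rightarrow> real) \<Rightarrow> ('x \<Rightarrow> 'y \<Rightarrow> real) \<Rightarrow> ('x,'y) qvec \<Rightarrow> ('x,'y) qvec" where
  "R1 q \<theta>' v = (\<lambda>k. 2 * (\<Sum>y\<in>UNIV. cinner (psi q \<theta>' y) v * psi q \<theta>' y k) - v k)"

definition Wop :: "('x::finite \<Rightarrow> 'y::finite \<Rightarrow> real) \<Rightarrow> ('y \<Rightarrow> 'x \<Rightarrow> real) \<Rightarrow> ('x \<Rightarrow> 'y \<Rightarrow> real) \<Rightarrow> ('x \<Rightarrow> 'y \<Rightarrow> real) \<Rightarrow> ('x,'y) qvec \<Rightarrow> ('x,'y) qvec" where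
  "Wop p q \<theta> \<theta>' v = R1 q \<theta>' (R0 p \<theta> v)"

definition HE :: "('x::finite \<Rightarrow> 'y::finite \<Rightarrow> bool) \<Rightarrow> ('x,'y) qvec set" where
  "HE M = {v. \<exists>c. v = (\<lambda>k. \<Sum>(x,y)\<in>{(x,y). M x y}. c x y * ket x y k)}"

definition HE_perp :: "('x::finite \<Rightarrow> 'y::finite \<Rightarrow> bool) \<Rightarrow> ('x,'y) qvec set" where
  "HE_perp M = {v. \<forall>u\<in>HE M. cinner u v = 0}"

definition bip_adj :: "('x \<Rightarrow> 'y \<Rightarrow> bool) \<Rightarrow> (('x + 'y) \<times> ('x + 'y)) set" where
  "bip_adj M = {(Inl x, Inr y) | x y. M x y} \<union> {(Inr y, Inl x) | x y. M x y}"

definition bip_connected :: "('x \<Rightarrow> 'y \<Rightarrow> bool) \<Rightarrow> bool" where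
  "bip_connected M \<longleftrightarrow> (\<forall>u v. (u, v) \<in> (bip_adj M)\<^sup>*)"

end

theory Submission
  imports Defs
begin

text \<open>Both R0 and R1 have the form 2\<Pi> - I, where \<Pi> is the orthogonal projection onto
the span of an orthonormal family (the vectors phi_x, resp. psi_y), so each is an involutive
reflection. Since p and q vanish off the edges, every phi_x and psi_y lies in H_E; hence each
reflection maps H_E into itself, and by involutivity onto itself, while it acts as -I on the
orthogonal complement of H_E. The product W = R1 R0 therefore permutes H_E and is
(-I)(-I) = I on that complement.\<close>

definition reflection ::
    "('i::finite \<Rightarrow> ('x::finite,'y::finite) qvec) \<Rightarrow> ('x,'y) qvec \<Rightarrow> ('x,'y) qvec" where
  "reflection f v = (\<lambda>k. 2 * (\<Sum>i\<in>UNIV. cinner (f i) v * f i k) - v k)"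

definition orthonormal :: "('i \<Rightarrow> ('x::finite,'y::finite) qvec) \<Rightarrow> bool" where
  "orthonormal f \<longleftrightarrow> (\<forall>i j. cinner (f i) (f j) = (if i = j then 1 else 0))"

lemma cinner_diff_right: "cinner u (\<lambda>k. v k - w k) = cinner u v - cinner u w"
  by (simp add: cinner_def right_diff_distrib sum_subtractf)

lemma cinner_sum_right:
  "cinner u (\<lambda>k. \<Sum>i\<in>I. c i * f i k) = (\<Sum>i\<in>I. c i * cinner u (f i))"
  unfolding cinner_def
  by (simp add: sum_distrib_left sum_distrib_right mult.left_commute sum.swap[of _ I])

lemma cinner_reflection:
  assumes "orthonormal f"
  shows "cinner (f i) (reflection f v) = cinner (f i) v"
proof -
  have "cinner (f i) (reflection f v)
      = 2 * (\<Sum>j\<in>UNIV. cinner (f j) v * cinner (f i) (f j)) - cinner (f i) v"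
    unfolding reflection_def cinner_diff_right
    using cinner_sum_right[where u="f i" and c="\<lambda>j. 2 * cinner (f j) v" and I=UNIV and f=f]
    by (simp add: sum_distrib_left mult.assoc)
  also have "\<dots> = cinner (f i) v"
    using assms unfolding orthonormal_def by (simp only:) (simp add: if_distrib cong: if_cong)
  finally show ?thesis .
qed

lemma reflection_reflection:
  assumes "orthonormal f"
  shows "reflection f (reflection f v) = v"
  using cinner_reflection[OF assms]
  by (simp add: reflection_def[of f "reflection f v"]) (simp add: reflection_def)

lemma cnj_mult_self_phase:
  assumes "r \<ge> 0"
  shows "of_real (sqrt r) * cnj (exp (\<i> * of_real t)) * (of_real (sqrt r) * exp (\<i> * of_real t)) = of_real r"
proof -
  define z where "z = of_real (sqrt r) * exp (\<i> * of_real t)"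
  have "cmod z = sqrt r"
    using assms by (simp add: z_def norm_mult)
  then have "cnj z * z = of_real r"
    using assms by (metis complex_norm_square mult.commute of_real_power real_sqrt_pow2)
  then show ?thesis by (simp add: z_def)
qed

lemma sum_UNIV_prod:
  fixes g :: "'a::finite \<times> 'b::finite \<Rightarrow> complex"
  shows "(\<Sum>k\<in>UNIV. g k) = (\<Sum>a\<in>UNIV. \<Sum>b\<in>UNIV. g (a,b))"
  by (simp add: UNIV_Times_UNIV[symmetric] sum.cartesian_product del: UNIV_Times_UNIV)

lemma orthonormal_phi:
  assumes "\<And>x y. p x y \<ge> 0" and "\<And>x. (\<Sum>y\<in>UNIV. p x y) = 1"
  shows "orthonormal (phi p \<theta>)"
  unfolding orthonormal_def
proof (intro allI)
  fix x x'
  show "cinner (phi p \<theta> x) (phi p \<theta> x') = (if x = x' then 1 else 0)"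
  proof (cases "x = x'")
    case True
    have "cinner (phi p \<theta> x) (phi p \<theta> x) = (\<Sum>y\<in>UNIV. of_real (p x y))"
      unfolding cinner_def sum_UNIV_prod
      by (simp add: sum.swap[where A=UNIV] assms(1) phi_def cnj_mult_self_phase if_distrib cong: if_cong)
    also have "\<dots> = 1" using assms(2)[of x] by (metis of_real_1 of_real_sum)
    finally show ?thesis using True by simp
  qed (auto simp: cinner_def phi_def intro!: sum.neutral)
qed

lemma orthonormal_psi:
  assumes "\<And>x y. q y x \<ge> 0" and "\<And>y. (\<Sum>x\<in>UNIV. q y x) = 1"
  shows "orthonormal (psi q \<theta>')"
  unfolding orthonormal_def
proof (intro allI)
  fix y y'
  show "cinner (psi q \<theta>' y) (psi q \<theta>' y') = (if y = y' then 1 else 0)"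
  proof (cases "y = y'")
    case True
    have "cinner (psi q \<theta>' y) (psi q \<theta>' y) = (\<Sum>x\<in>UNIV. of_real (q y x))"
      unfolding cinner_def sum_UNIV_prod
      by (simp add: assms(1) psi_def cnj_mult_self_phase if_distrib cong: if_cong)
    also have "\<dots> = 1" using assms(2)[of y] by (metis of_real_1 of_real_sum)
    finally show ?thesis using True by simp
  qed (auto simp: cinner_def psi_def intro!: sum.neutral)
qed

lemma sum_ket_apply:
  fixes S :: "('x::finite \<times> 'y::finite) set"
  shows "(\<Sum>(a,b)\<in>S. c a b * ket a b k) = (if k \<in> S then c (fst k) (snd k) else 0)"
proof -
  have "(\<Sum>(a,b)\<in>S. c a b * ket a b k) = (\<Sum>z\<in>S. if z = k then c (fst k) (snd k) else 0)"
    by (rule sum.cong) (auto simp: ket_def)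
  then show ?thesis by simp
qed

lemma mem_HE_iff: "v \<in> HE M \<longleftrightarrow> (\<forall>x y. \<not> M x y \<longrightarrow> v (x,y) = 0)"
proof
  assume "v \<in> HE M"
  then show "\<forall>x y. \<not> M x y \<longrightarrow> v (x,y) = 0"
    unfolding HE_def by (force simp: sum_ket_apply)
next
  assume supp: "\<forall>x y. \<not> M x y \<longrightarrow> v (x,y) = 0"
  have "v = (\<lambda>k. \<Sum>(x,y)\<in>{(x,y). M x y}. v (x,y) * ket x y k)"
  proof
    fix k :: "'a \<times> 'b"
    show "v k = (\<Sum>(x,y)\<in>{(x,y). M x y}. v (x,y) * ket x y k)"
      using supp by (cases k) (simp add: sum_ket_apply)
  qed
  then show "v \<in> HE M"
    unfolding HE_def by (intro CollectI exI[of _ "\<lambda>x y. v (x,y)"])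
qed

lemma cinner_ket_left: "cinner (ket x y) v = v (x,y)"
proof -
  have "cinner (ket x y) v = (\<Sum>k\<in>UNIV. if k = (x,y) then v k else 0)"
    unfolding cinner_def ket_def by (rule sum.cong) simp_all
  then show ?thesis by simp
qed

lemma mem_HE_perp_iff: "v \<in> HE_perp M \<longleftrightarrow> (\<forall>x y. M x y \<longrightarrow> v (x,y) = 0)"
proof
  assume "v \<in> HE_perp M"
  moreover have "M x y \<Longrightarrow> ket x y \<in> HE M" for x y
    by (simp add: mem_HE_iff ket_def)
  ultimately show "\<forall>x y. M x y \<longrightarrow> v (x,y) = 0"
    unfolding HE_perp_def by (simp add: cinner_ket_left[symmetric])
next
  assume "\<forall>x y. M x y \<longrightarrow> v (x,y) = 0"
  then have "u \<in> HE M \<Longrightarrow> cnj (u k) * v k = 0" for u k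
    unfolding mem_HE_iff by (cases k) auto
  then show "v \<in> HE_perp M"
    unfolding HE_perp_def cinner_def by (simp add: sum.neutral)
qed

lemma reflection_HE:
  assumes "\<And>i. f i \<in> HE M" and "v \<in> HE M"
  shows "reflection f v \<in> HE M"
  using assms unfolding mem_HE_iff reflection_def by simp

lemma reflection_HE_perp:
  assumes "\<And>i. f i \<in> HE M" and "v \<in> HE_perp M"
  shows "reflection f v = (\<lambda>k. - v k)"
  using assms unfolding HE_perp_def reflection_def by simp

lemma image_reflection_HE:
  assumes "orthonormal f" and "\<And>i. f i \<in> HE M"
  shows "reflection f ` HE M = HE M"
proof
  show "reflection f ` HE M \<subseteq> HE M"
    using reflection_HE[OF assms(2)] by (rule image_subsetI)
  show "HE M \<subseteq> reflection f ` HE M"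
  proof
    fix v assume "v \<in> HE M"
    then have "reflection f v \<in> HE M"
      by (rule reflection_HE[OF assms(2)])
    moreover have "v = reflection f (reflection f v)"
      using assms(1) by (simp add: reflection_reflection)
    ultimately show "v \<in> reflection f ` HE M" by blast
  qed
qed

lemma phi_in_HE:
  assumes "\<And>x y. \<not> M x y \<Longrightarrow> p x y = 0"
  shows "phi p \<theta> x \<in> HE M"
  using assms unfolding mem_HE_iff phi_def by auto

lemma psi_in_HE:
  assumes "\<And>x y. \<not> M x y \<Longrightarrow> q y x = 0"
  shows "psi q \<theta>' y \<in> HE M"
  using assms unfolding mem_HE_iff psi_def by auto

lemma Wop_eq_reflections: "Wop p q \<theta> \<theta>' = reflection (psi q \<theta>') \<circ> reflection (phi p \<theta>)"
  by (rule ext) (simp add: Wop_def R0_def R1_def reflection_def)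

theorem lemma1:
  fixes M :: "'x::finite \<Rightarrow> 'y::finite \<Rightarrow> bool"
    and p :: "'x \<Rightarrow> 'y \<Rightarrow> real" and q :: "'y \<Rightarrow> 'x \<Rightarrow> real"
    and \<theta> \<theta>' :: "'x \<Rightarrow> 'y \<Rightarrow> real"
  assumes conn: "bip_connected M"
    and p_nonneg: "\<And>x y. p x y \<ge> 0"
    and p_stoch: "\<And>x. (\<Sum>y\<in>UNIV. p x y) = 1"
    and p_supp: "\<And>x y. \<not> M x y \<Longrightarrow> p x y = 0"
    and q_nonneg: "\<And>x y. q y x \<ge> 0"
    and q_stoch: "\<And>y. (\<Sum>x\<in>UNIV. q y x) = 1"
    and q_supp: "\<And>x y. \<not> M x y \<Longrightarrow> q y x = 0"
  shows "Wop p q \<theta> \<theta>' ` HE M = HE M \<and> (\<forall>v\<in>HE_perp M. Wop p q \<theta> \<theta>' v = v)"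
proof
  have phi: "orthonormal (phi p \<theta>)" "\<And>x. phi p \<theta> x \<in> HE M"
    using orthonormal_phi[OF p_nonneg p_stoch] phi_in_HE[OF p_supp] .
  have psi: "orthonormal (psi q \<theta>')" "\<And>y. psi q \<theta>' y \<in> HE M"
    using orthonormal_psi[OF q_nonneg q_stoch] psi_in_HE[OF q_supp] .
  show "Wop p q \<theta> \<theta>' ` HE M = HE M"
    unfolding Wop_eq_reflections image_comp[symmetric]
    by (simp add: image_reflection_HE[OF phi] image_reflection_HE[OF psi])
  show "\<forall>v\<in>HE_perp M. Wop p q \<theta> \<theta>' v = v"
  proof
    fix v assume v: "v \<in> HE_perp M"
    have "reflection (phi p \<theta>) v = (\<lambda>k. - v k)"
      using phi(2) v by (rule reflection_HE_perp)
    moreover have "(\<lambda>k. - v k) \<in> HE_perp M"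
      using v by (simp add: mem_HE_perp_iff)
    then have "reflection (psi q \<theta>') (\<lambda>k. - v k) = v"
      by (simp add: reflection_HE_perp[where f="psi q \<theta>'", OF psi(2)])
    ultimately show "Wop p q \<theta> \<theta>' v = v"
      by (simp add: Wop_eq_reflections)
  qed
qed
end
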